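(* In the setting below, let $i_1,\dots,i_m\in I$ and set $i_r':=(g_{i_1}g_{i_2}\cdots g_{i_{r-1}})(i_r)\in S$ for $1\le r\le m$. (1) If $i_r'=i_{r+1}'$ for some $r$, then there are $j_1,\dots,j_{m-2}\in I$ with $l_{j_1}\cdots l_{j_{m-2}}=l_{i_1}\cdots l_{i_m}$ in $L$ such that $j_k'=i_k'$ for $1\le k\le r-1$ and $j_k'=i_{k+2}'$ for $r\le k\le m-2$ (where $j_k'$ is defined from $j_1,\dots,j_k$ in the same way). (2) If $i_r'$ and $i_{r+1}'$ commute in $W$, then there are $j_1,\dots,j_m\in I$ with $l_{j_1}\cdots l_{j_m}=l_{i_1}\cdots l_{i_m}$ in $L$ such that $j_k'=i_k'$ for $k\ne r,r+1$, $j_r'=i_{r+1}'$ and $j_{r+1}'=i_r'$.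
   Context: Setting: $(W,S)$ is a right-angled Coxeter system (all off-diagonal Coxeter matrix entries in $\{2,\infty\}$), $G$ is a subgroup of $\mathrm{Aut}(W,S)$ (automorphisms of $W$ mapping $S$ bijectively to $S$), $I\subset S$, and $\{g_i\}_{i\in I}$ is a family of involutions in $G$ such that: (i) $g_i(s)\in S$ for all $i\in I$, $s\in S$; (ii) for all $i,j\in I$ with $ij=ji$, either [$g_i(j)\in I$, $g_j(i)=i$ and $g_{g_i(j)}=g_ig_jg_i$] or [$g_j(i)\in I$, $g_i(j)=j$ and $g_{g_j(i)}=g_jg_ig_j$]; (iii) $g_i(i)=i$ for all $i\in I$. $L$ is the group generated by symbols $l_i$, $i\in I$, subject to $l_i^2=1$ for all $i$, and $l_il_j=l_{g_i(j)}l_i$ whenever $ij=ji$, $g_j(i)=i$, $g_i(j)\in I$ and $g_{g_i(j)}=g_ig_jg_i$. *)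

theory Defs
  imports Main "HOL-Library.Extended_Nat"
begin

text \<open>Congruence closure on words generated by a set of defining relations:
  two words are equal in the presented monoid iff they are related.\<close>
definition rewrite_step :: "('a list \<times> 'a list) set \<Rightarrow> 'a list \<Rightarrow> 'a list \<Rightarrow> bool" where
  "rewrite_step R w w' \<longleftrightarrow> (\<exists>xs ys u v. (u, v) \<in> R \<and> w = xs @ u @ ys \<and> w' = xs @ v @ ys)"

definition pres_eq :: "('a list \<times> 'a list) set \<Rightarrow> 'a list \<Rightarrow> 'a list \<Rightarrow> bool" where
  "pres_eq R = equivclp (rewrite_step R)"

text \<open>Coxeter matrix on the generating set S (= the type 'a).\<close>
definition coxeter_matrix :: "('a \<Rightarrow> 'a \<Rightarrow> enat) \<Rightarrow> bool" where
  "coxeter_matrix M \<longleftrightarrow> (\<forall>s. M s s = 1) \<and> (\<forall>s t. M s t = M t s)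
      \<and> (\<forall>s t. s \<noteq> t \<longrightarrow> M s t \<ge> 2)"

definition right_angled :: "('a \<Rightarrow> 'a \<Rightarrow> enat) \<Rightarrow> bool" where
  "right_angled M \<longleftrightarrow> coxeter_matrix M \<and> (\<forall>s t. s \<noteq> t \<longrightarrow> M s t = 2 \<or> M s t = \<infinity>)"

definition coxeter_rels :: "('a \<Rightarrow> 'a \<Rightarrow> enat) \<Rightarrow> ('a list \<times> 'a list) set" where
  "coxeter_rels M = {(concat (replicate k [s, t]), []) | s t k. M s t = enat k}"

definition W_eq :: "('a \<Rightarrow> 'a \<Rightarrow> enat) \<Rightarrow> 'a list \<Rightarrow> 'a list \<Rightarrow> bool" where
  "W_eq M = pres_eq (coxeter_rels M)"

text \<open>Aut(W,S): automorphisms of W permuting S, represented by their restriction to S.\<close>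
definition AutWS :: "('a \<Rightarrow> 'a \<Rightarrow> enat) \<Rightarrow> ('a \<Rightarrow> 'a) set" where
  "AutWS M = {\<sigma>. bij \<sigma> \<and> (\<forall>u v. W_eq M u v \<longleftrightarrow> W_eq M (map \<sigma> u) (map \<sigma> v))}"

definition subgroup_of_Aut :: "('a \<Rightarrow> 'a \<Rightarrow> enat) \<Rightarrow> ('a \<Rightarrow> 'a) set \<Rightarrow> bool" where
  "subgroup_of_Aut M G \<longleftrightarrow> G \<subseteq> AutWS M \<and> id \<in> G
      \<and> (\<forall>f\<in>G. \<forall>h\<in>G. f \<circ> h \<in> G) \<and> (\<forall>f\<in>G. inv f \<in> G)"

text \<open>Defining relations of L (generators l_i, i in I, represented by i).\<close>
definition L_rels :: "('a \<Rightarrow> 'a \<Rightarrow> enat) \<Rightarrow> 'a set \<Rightarrow> ('a \<Rightarrow> 'a \<Rightarrow> 'a) \<Rightarrow> ('a list \<times> 'a list) set" where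
  "L_rels M I g = {([i, i], []) | i. i \<in> I}
     \<union> {([i, j], [g i j, i]) | i j. i \<in> I \<and> j \<in> I \<and> W_eq M [i, j] [j, i]
            \<and> g j i = i \<and> g i j \<in> I \<and> g (g i j) = g i \<circ> g j \<circ> g i}"

definition L_eq :: "('a \<Rightarrow> 'a \<Rightarrow> enat) \<Rightarrow> 'a set \<Rightarrow> ('a \<Rightarrow> 'a \<Rightarrow> 'a) \<Rightarrow> 'a list \<Rightarrow> 'a list \<Rightarrow> bool" where
  "L_eq M I g = pres_eq (L_rels M I g)"

definition gprod :: "('a \<Rightarrow> 'a \<Rightarrow> 'a) \<Rightarrow> 'a list \<Rightarrow> 'a \<Rightarrow> 'a" where
  "gprod g xs = foldr (\<lambda>i f. g i \<circ> f) xs id"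

text \<open>The list i_1', ..., i_m' with i_r' = (g_{i_1} ... g_{i_{r-1}})(i_r) (0-indexed).\<close>
definition primes :: "('a \<Rightarrow> 'a \<Rightarrow> 'a) \<Rightarrow> 'a list \<Rightarrow> 'a list" where
  "primes g xs = map (\<lambda>k. gprod g (take k xs) (xs ! k)) [0..<length xs]"

end

theory Submission
  imports Defs
begin

text \<open>Write \<open>i\<^sub>1 \<dots> i\<^sub>m = p @ [a, b] @ q\<close> with \<open>H = g\<^sub>p\<close> the product of the \<open>g\<close>'s along \<open>p\<close>.
  The primes at positions \<open>r, r+1\<close> are \<open>H a\<close> and \<open>H (g\<^sub>a b)\<close>, and those after them are
  \<open>H g\<^sub>a g\<^sub>b\<close> applied to the primes of \<open>q\<close>. Since \<open>H\<close> and \<open>g\<^sub>a\<close> are automorphisms of \<open>(W,S)\<close>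
  and \<open>g\<^sub>a\<close> is an involution fixing \<open>a\<close>, equal primes force \<open>b = a\<close>, and then the relation
  \<open>l\<^sub>a\<^sup>2 = 1\<close> deletes the pair; commuting primes force \<open>a\<close> and \<open>b\<close> to commute in \<open>W\<close>. In the
  latter case condition (ii) provides a defining relation of \<open>L\<close> rewriting \<open>l\<^sub>a l\<^sub>b\<close> into
  \<open>l\<^sub>c l\<^sub>d\<close> with \<open>c = g\<^sub>a b\<close>, \<open>g\<^sub>c d = a\<close> and \<open>g\<^sub>c g\<^sub>d = g\<^sub>a g\<^sub>b\<close> (either directly, or after
  conjugating by \<open>l\<^sub>b\<close>), which swaps the two primes and leaves all others unchanged.\<close>

lemma gprod_Nil [simp]: "gprod g [] = id"
  by (simp add: gprod_def)

lemma gprod_Cons [simp]: "gprod g (x # xs) = g x \<circ> gprod g xs"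
  by (simp add: gprod_def)

lemma gprod_append [simp]: "gprod g (xs @ ys) = gprod g xs \<circ> gprod g ys"
  by (induction xs) (simp_all add: comp_assoc)

lemma length_primes [simp]: "length (primes g xs) = length xs"
  by (simp add: primes_def)

lemma primes_Nil [simp]: "primes g [] = []"
  by (simp add: primes_def)

lemma primes_Cons [simp]: "primes g (x # xs) = x # map (g x) (primes g xs)"
proof -
  have "[0..<length (x # xs)] = 0 # map Suc [0..<length xs]"
    by (simp only: length_Cons upt_conv_Cons[OF zero_less_Suc] map_Suc_upt)
  then show ?thesis
    by (simp add: primes_def)
qed

lemma primes_append [simp]:
  "primes g (xs @ ys) = primes g xs @ map (gprod g xs) (primes g ys)"
  by (induction xs) auto

lemma primes_append_pair:
  "primes g (p @ [a, b] @ q) = primes g p @ [gprod g p a, gprod g p (g a b)]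
     @ map (gprod g (p @ [a, b])) (primes g q)"
  by (simp add: comp_def)

lemma rewrite_step_append_context:
  "rewrite_step R u v \<Longrightarrow> rewrite_step R (xs @ u @ ys) (xs @ v @ ys)"
  unfolding rewrite_step_def by (metis append.assoc)

lemma pres_eq_append_context:
  assumes "pres_eq R u v"
  shows "pres_eq R (xs @ u @ ys) (xs @ v @ ys)"
  using assms unfolding pres_eq_def
proof (induction rule: equivclp_induct)
  case base
  show ?case
    by simp
next
  case (step y z)
  then show ?case
    by (auto intro: equivclp_into_equivclp rewrite_step_append_context)
qed

lemma pres_eq_rel: "(u, v) \<in> R \<Longrightarrow> pres_eq R u v"
  unfolding pres_eq_def rewrite_step_def
  by (rule r_into_equivclp) (metis append_Nil append_Nil2)

lemma pres_eq_sym: "pres_eq R u v \<Longrightarrow> pres_eq R v u"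
  unfolding pres_eq_def by (rule equivclp_sym)

lemma pres_eq_trans: "pres_eq R u v \<Longrightarrow> pres_eq R v w \<Longrightarrow> pres_eq R u w"
  unfolding pres_eq_def by (rule equivclp_trans)

lemma L_eq_sym: "L_eq M I g u v \<Longrightarrow> L_eq M I g v u"
  unfolding L_eq_def by (rule pres_eq_sym)

lemma L_eq_trans [trans]: "L_eq M I g u v \<Longrightarrow> L_eq M I g v w \<Longrightarrow> L_eq M I g u w"
  unfolding L_eq_def by (rule pres_eq_trans)

lemma L_eq_append_context: "L_eq M I g u v \<Longrightarrow> L_eq M I g (xs @ u @ ys) (xs @ v @ ys)"
  unfolding L_eq_def by (rule pres_eq_append_context)

lemma L_eq_rel: "(u, v) \<in> L_rels M I g \<Longrightarrow> L_eq M I g u v"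
  unfolding L_eq_def by (rule pres_eq_rel)

lemma AutWS_W_eq_map_iff:
  "\<sigma> \<in> AutWS M \<Longrightarrow> W_eq M (map \<sigma> u) (map \<sigma> v) \<longleftrightarrow> W_eq M u v"
  by (simp add: AutWS_def)

lemma AutWS_inj: "\<sigma> \<in> AutWS M \<Longrightarrow> inj \<sigma>"
  by (simp add: AutWS_def bij_is_inj)

locale L_setting =
  fixes M :: "'a \<Rightarrow> 'a \<Rightarrow> enat" and G :: "('a \<Rightarrow> 'a) set"
    and I :: "'a set" and g :: "'a \<Rightarrow> 'a \<Rightarrow> 'a"
  assumes subG: "subgroup_of_Aut M G"
    and gG: "\<forall>i\<in>I. g i \<in> G"
    and invol: "\<forall>i\<in>I. g i \<circ> g i = id"
    and cond_ii: "\<forall>i\<in>I. \<forall>j\<in>I. W_eq M [i, j] [j, i] \<longrightarrow>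
        (g i j \<in> I \<and> g j i = i \<and> g (g i j) = g i \<circ> g j \<circ> g i) \<or>
        (g j i \<in> I \<and> g i j = j \<and> g (g j i) = g j \<circ> g i \<circ> g j)"
    and cond_iii: "\<forall>i\<in>I. g i i = i"
begin

lemma g_g_cancel [simp]: "i \<in> I \<Longrightarrow> g i (g i x) = x"
  using invol by (metis comp_apply id_apply)

lemma g_self [simp]: "i \<in> I \<Longrightarrow> g i i = i"
  using cond_iii by blast

lemma gprod_in_AutWS: "set xs \<subseteq> I \<Longrightarrow> gprod g xs \<in> AutWS M"
proof -
  assume "set xs \<subseteq> I"
  then have "gprod g xs \<in> G"
    using subG gG by (induction xs) (auto simp: subgroup_of_Aut_def)
  then show ?thesis
    using subG by (auto simp: subgroup_of_Aut_def)
qed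

lemma L_eq_square: "a \<in> I \<Longrightarrow> L_eq M I g [a, a] []"
  by (rule L_eq_rel) (auto simp: L_rels_def)

lemma g_in_AutWS: "i \<in> I \<Longrightarrow> g i \<in> AutWS M"
  using gG subG by (auto simp: subgroup_of_Aut_def)

lemma eq_of_equal_primes:
  assumes "set p \<subseteq> I" "a \<in> I" and "gprod g p a = gprod g p (g a b)"
  shows "b = a"
proof -
  have "a = g a b"
    using assms AutWS_inj[OF gprod_in_AutWS] by (auto dest: injD)
  have "b = g a (g a b)"
    using \<open>a \<in> I\<close> by simp
  also have "\<dots> = g a a"
    using \<open>a = g a b\<close> by simp
  also have "\<dots> = a"
    using \<open>a \<in> I\<close> by simp
  finally show ?thesis .
qed

lemma commute_of_commuting_primes:
  assumes "set p \<subseteq> I" "a \<in> I"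
    and "W_eq M [gprod g p a, gprod g p (g a b)] [gprod g p (g a b), gprod g p a]"
  shows "W_eq M [a, b] [b, a]"
proof -
  have "W_eq M [a, g a b] [g a b, a]"
    using assms AutWS_W_eq_map_iff[OF gprod_in_AutWS, of p "[a, g a b]" "[g a b, a]"] by simp
  then have "W_eq M (map (g a) [a, g a b]) (map (g a) [g a b, a])"
    using AutWS_W_eq_map_iff[OF g_in_AutWS] \<open>a \<in> I\<close> by blast
  then show ?thesis
    using \<open>a \<in> I\<close> by simp
qed

lemma exchange_commuting:
  assumes "a \<in> I" "b \<in> I" and "W_eq M [a, b] [b, a]"
  obtains c d where "c \<in> I" "d \<in> I" "L_eq M I g [c, d] [a, b]"
    and "c = g a b" "g c d = a" "g c \<circ> g d = g a \<circ> g b"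
proof -
  have "(g a b \<in> I \<and> g b a = a \<and> g (g a b) = g a \<circ> g b \<circ> g a) \<or>
        (g b a \<in> I \<and> g a b = b \<and> g (g b a) = g b \<circ> g a \<circ> g b)"
    using cond_ii assms by blast
  then show thesis
  proof (elim disjE conjE)
    assume ab: "g a b \<in> I" "g b a = a" "g (g a b) = g a \<circ> g b \<circ> g a"
    have "L_eq M I g [a, b] [g a b, a]"
      by (rule L_eq_rel) (use ab assms in \<open>auto simp: L_rels_def\<close>)
    show thesis
    proof (rule that)
      show "L_eq M I g [g a b, a] [a, b]"
        by (rule L_eq_sym) fact
      show "g (g a b) a = a" "g (g a b) \<circ> g a = g a \<circ> g b"
        using ab \<open>a \<in> I\<close> by (auto simp: fun_eq_iff)
    qed (use ab assms in auto)
  next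
    assume ba: "g b a \<in> I" "g a b = b" "g (g b a) = g b \<circ> g a \<circ> g b"
    define d where "d = g b a"
    have W_ba: "W_eq M [b, a] [a, b]"
      using assms(3) unfolding W_eq_def by (rule pres_eq_sym)
    \<comment> \<open>conjugate \<open>l\<^sub>b l\<^sub>a = l\<^sub>d l\<^sub>b\<close> by \<open>l\<^sub>b\<close>\<close>
    have "L_eq M I g [b, a] [d, b]"
      unfolding d_def by (rule L_eq_rel) (use ba assms W_ba in \<open>auto simp: L_rels_def\<close>)
    have "L_eq M I g [a, b] [b, b, a, b]"
      by (rule L_eq_sym)
        (use L_eq_append_context[OF L_eq_square[OF \<open>b \<in> I\<close>], of "[]" "[a, b]"] in simp)
    also have "L_eq M I g \<dots> [b, d, b, b]"
      using L_eq_append_context[OF \<open>L_eq M I g [b, a] [d, b]\<close>, of "[b]" "[b]"] by simp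
    also have "L_eq M I g \<dots> [b, d]"
      using L_eq_append_context[OF L_eq_square[OF \<open>b \<in> I\<close>], of "[b, d]" "[]"] by simp
    finally have "L_eq M I g [a, b] [b, d]" .
    show thesis
    proof (rule that)
      show "L_eq M I g [b, d] [a, b]"
        by (rule L_eq_sym) fact
      show "g b \<circ> g d = g a \<circ> g b"
        using ba \<open>b \<in> I\<close> by (auto simp: d_def fun_eq_iff)
    qed (use ba assms in \<open>auto simp: d_def\<close>)
  qed
qed

lemma cancel_equal_primes:
  assumes "set p \<subseteq> I" "a \<in> I" "b \<in> I" "set q \<subseteq> I"
    and "gprod g p a = gprod g p (g a b)"
  shows "\<exists>js. set js \<subseteq> I \<and> length js = length p + length q \<and> L_eq M I g js (p @ [a, b] @ q)
    \<and> primes g js = primes g p @ map (gprod g (p @ [a, b])) (primes g q)"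
proof (intro exI conjI)
  have "b = a"
    using assms(1,2,5) by (rule eq_of_equal_primes)
  show "L_eq M I g (p @ [] @ q) (p @ [a, b] @ q)"
    by (rule L_eq_sym)
      (use \<open>b = a\<close> L_eq_append_context[OF L_eq_square[OF \<open>a \<in> I\<close>]] in simp)
  show "primes g (p @ [] @ q) = primes g p @ map (gprod g (p @ [a, b])) (primes g q)"
    using invol \<open>a \<in> I\<close> \<open>b = a\<close> by (simp add: comp_assoc)
qed (use assms in auto)

lemma swap_commuting_primes:
  assumes "set p \<subseteq> I" "a \<in> I" "b \<in> I" "set q \<subseteq> I"
    and "W_eq M [gprod g p a, gprod g p (g a b)] [gprod g p (g a b), gprod g p a]"
  shows "\<exists>js. set js \<subseteq> I \<and> length js = length p + 2 + length q \<and> L_eq M I g js (p @ [a, b] @ q)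
    \<and> primes g js = primes g p @ [gprod g p (g a b), gprod g p a]
                      @ map (gprod g (p @ [a, b])) (primes g q)"
proof -
  have "W_eq M [a, b] [b, a]"
    using assms(1,2,5) by (rule commute_of_commuting_primes)
  then obtain c d where cd: "c \<in> I" "d \<in> I" "L_eq M I g [c, d] [a, b]"
    and "c = g a b" "g c d = a" "g c \<circ> g d = g a \<circ> g b"
    using exchange_commuting assms(2,3) by blast
  then show ?thesis
    using assms(1,4) L_eq_append_context[OF cd(3)]
    by (intro exI[of _ "p @ [c, d] @ q"]) (auto simp: comp_assoc)
qed

end

lemma decompose_at_pair:
  assumes "Suc r < length xs"
  shows "xs = take r xs @ [xs ! r, xs ! Suc r] @ drop (Suc (Suc r)) xs"
  using assms by (simp add: Cons_nth_drop_Suc)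

theorem lemma2:
  fixes M :: "'a \<Rightarrow> 'a \<Rightarrow> enat" and G :: "('a \<Rightarrow> 'a) set"
    and I :: "'a set" and g :: "'a \<Rightarrow> 'a \<Rightarrow> 'a"
  assumes RA: "right_angled M"
    and subG: "subgroup_of_Aut M G"
    and gG: "\<forall>i\<in>I. g i \<in> G"
    and invol: "\<forall>i\<in>I. g i \<circ> g i = id"
    and cond_ii: "\<forall>i\<in>I. \<forall>j\<in>I. W_eq M [i, j] [j, i] \<longrightarrow>
        (g i j \<in> I \<and> g j i = i \<and> g (g i j) = g i \<circ> g j \<circ> g i) \<or>
        (g j i \<in> I \<and> g i j = j \<and> g (g j i) = g j \<circ> g i \<circ> g j)"
    and cond_iii: "\<forall>i\<in>I. g i i = i"
  shows "\<forall>is r. set is \<subseteq> I \<and> Suc r < length is \<longrightarrow>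
      (primes g is ! r = primes g is ! Suc r \<longrightarrow>
         (\<exists>js. set js \<subseteq> I \<and> length js = length is - 2 \<and> L_eq M I g js is \<and>
               primes g js = take r (primes g is) @ drop (Suc (Suc r)) (primes g is)))
    \<and> (W_eq M [primes g is ! r, primes g is ! Suc r] [primes g is ! Suc r, primes g is ! r] \<longrightarrow>
         (\<exists>js. set js \<subseteq> I \<and> length js = length is \<and> L_eq M I g js is \<and>
               primes g js = take r (primes g is) @ [primes g is ! Suc r, primes g is ! r]
                              @ drop (Suc (Suc r)) (primes g is)))"
  apply (intro allI impI)
  subgoal premises prems for "is" r
  proof -
    interpret L_setting M G I g
      using subG gG invol cond_ii cond_iii by unfold_locales
    define p a b q where "p = take r is" and "a = is ! r" and "b = is ! Suc r"
      and "q = drop (Suc (Suc r)) is"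
    have "is": "is = p @ [a, b] @ q"
      using prems decompose_at_pair[of r "is"] by (simp add: p_def a_def b_def q_def)
    have r: "r = length p"
      using prems by (simp add: p_def)
    have I: "set p \<subseteq> I" "a \<in> I" "b \<in> I" "set q \<subseteq> I"
      using prems unfolding "is" by auto
    have P: "primes g is ! r = gprod g p a" "primes g is ! Suc r = gprod g p (g a b)"
      "take r (primes g is) = primes g p"
      "drop (Suc (Suc r)) (primes g is) = map (gprod g (p @ [a, b])) (primes g q)"
      unfolding "is" primes_append_pair by (simp_all add: r nth_append del: gprod_append)
    have len: "length is - 2 = length p + length q" "length is = length p + 2 + length q"
      unfolding "is" by simp_all
    show ?thesis
      using cancel_equal_primes[OF I] swap_commuting_primes[OF I]
      unfolding P len(1) unfolding len(2) "is"[symmetric] by blast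
  qed
  done

end
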